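(* Let $\mathcal{K}$ be a commutative ring and $\mathcal{A}$ a (possibly noncommutative) $\mathcal{K}$-ring, regarded as an $\mathcal{A}$-bimodule over itself. If $\Delta_1$ is an $n$-order and $\Delta_2$ an $m$-order $\mathcal{A}$-valued left differential operator on $\mathcal{A}$ (in the sense defined in the context), then the composition $\Delta_1\circ\Delta_2$ is an $(n+m)$-order $\mathcal{A}$-valued left differential operator on $\mathcal{A}$.
   Context: A $\mathcal{K}$-ring is a unital associative $\mathcal{K}$-algebra with $1\neq0$. $\mathrm{Hom}_{\mathcal{K}}(\mathcal{A},\mathcal{A})$ is an $\mathcal{A}$-bimodule via $(a\Phi)(x)=a\Phi(x)$ and $(\Phi\bullet a)(x)=\Phi(ax)$; put $\delta_a\Phi:=a\Phi-\Phi\bullet a$. For such a bimodule $M$ its center is $\{x\in M: ax=x\bullet a\ \forall a\in\mathcal{A}\}$. Define $\mathcal{Z}_0$ = center of $\mathrm{Hom}_{\mathcal{K}}(\mathcal{A},\mathcal{A})$, $\mathcal{I}_0$ = sub-bimodule generated by $\mathcal{Z}_0$; inductively for $r\ge1$, $\mathcal{Z}_r$ = center of the quotient bimodule $\mathrm{Hom}_{\mathcal{K}}(\mathcal{A},\mathcal{A})/\mathcal{I}_{r-1}$, $\overline{\mathcal{Z}}_r$ = sub-bimodule generated by $\mathcal{Z}_r$, and $\mathcal{I}_r$ the sub-bimodule with $\mathcal{I}_r/\mathcal{I}_{r-1}=\overline{\mathcal{Z}}_r$. An $r$-order $\mathcal{A}$-valued (left) differential operator on $\mathcal{A}$ is an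 element of $\mathcal{I}_r$ (Lunts–Rosenberg). *)

theory Defs
  imports Main
begin

definition K_ring :: "('k::comm_ring_1 \<Rightarrow> 'a::ring_1 \<Rightarrow> 'a) \<Rightarrow> bool" where
  "K_ring sm \<longleftrightarrow>
     (\<forall>c x y. sm c (x + y) = sm c x + sm c y) \<and>
     (\<forall>c d x. sm (c + d) x = sm c x + sm d x) \<and>
     (\<forall>c d x. sm (c * d) x = sm c (sm d x)) \<and>
     (\<forall>x. sm 1 x = x) \<and>
     (\<forall>c x y. sm c (x * y) = sm c x * y) \<and>
     (\<forall>c x y. sm c (x * y) = x * sm c y)"

definition HomK :: "('k::comm_ring_1 \<Rightarrow> 'a::ring_1 \<Rightarrow> 'a) \<Rightarrow> ('a \<Rightarrow> 'a) set" where
  "HomK sm = {\<Phi>. (\<forall>x y. \<Phi> (x + y) = \<Phi> x + \<Phi> y) \<and> (\<forall>c x. \<Phi> (sm c x) = sm c (\<Phi> x))}"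

definition lact :: "'a::ring_1 \<Rightarrow> ('a \<Rightarrow> 'a) \<Rightarrow> ('a \<Rightarrow> 'a)" where
  "lact a \<Phi> = (\<lambda>x. a * \<Phi> x)"

definition ract :: "('a::ring_1 \<Rightarrow> 'a) \<Rightarrow> 'a \<Rightarrow> ('a \<Rightarrow> 'a)" where
  "ract \<Phi> a = (\<lambda>x. \<Phi> (a * x))"

definition delta :: "'a::ring_1 \<Rightarrow> ('a \<Rightarrow> 'a) \<Rightarrow> ('a \<Rightarrow> 'a)" where
  "delta a \<Phi> = (\<lambda>x. lact a \<Phi> x - ract \<Phi> a x)"

text \<open>Sub-bimodule of Hom_K(A,A) generated by a set S of K-linear maps
  (closure under 0, +, left and right A-action; K-scalars act through K\<cdot>1 \<subseteq> A,
  negation is the left action of -1).\<close>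
inductive_set gen_bimod :: "('a::ring_1 \<Rightarrow> 'a) set \<Rightarrow> ('a \<Rightarrow> 'a) set"
  for S :: "('a \<Rightarrow> 'a) set" where
  gen_base: "\<Phi> \<in> S \<Longrightarrow> \<Phi> \<in> gen_bimod S"
| gen_zero: "(\<lambda>x. 0) \<in> gen_bimod S"
| gen_add: "\<Phi> \<in> gen_bimod S \<Longrightarrow> \<Psi> \<in> gen_bimod S \<Longrightarrow> (\<lambda>x. \<Phi> x + \<Psi> x) \<in> gen_bimod S"
| gen_lact: "\<Phi> \<in> gen_bimod S \<Longrightarrow> lact a \<Phi> \<in> gen_bimod S"
| gen_ract: "\<Phi> \<in> gen_bimod S \<Longrightarrow> ract \<Phi> a \<in> gen_bimod S"

text \<open>I_0 is generated by the center Z_0 of Hom_K(A,A).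
  For r \<ge> 1, the center of Hom_K(A,A)/I_{r-1} consists of the classes of those \<Phi>
  with \<delta>_a \<Phi> \<in> I_{r-1} for all a; I_r is the preimage of the sub-bimodule it
  generates, i.e. the sub-bimodule generated by these \<Phi> together with I_{r-1}.\<close>
fun diff_ops :: "('k::comm_ring_1 \<Rightarrow> 'a::ring_1 \<Rightarrow> 'a) \<Rightarrow> nat \<Rightarrow> ('a \<Rightarrow> 'a) set" where
  "diff_ops sm 0 = gen_bimod {\<Phi> \<in> HomK sm. \<forall>a. lact a \<Phi> = ract \<Phi> a}"
| "diff_ops sm (Suc r) =
     gen_bimod ({\<Phi> \<in> HomK sm. \<forall>a. delta a \<Phi> \<in> diff_ops sm r} \<union> diff_ops sm r)"

end

theory Submission
  imports Defs
begin

(* Composition is additive in both arguments and satisfies (\<Phi>\<bullet>a) \<circ> \<Psi> = \<Phi> \<circ> (a\<Psi>) and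
  \<Phi> \<circ> (\<Psi>\<bullet>a) = (\<Phi> \<circ> \<Psi>)\<bullet>a, while \<Phi> \<circ> (a\<Psi>) differs from a(\<Phi> \<circ> \<Psi>) only by \<delta>_a \<Phi> \<circ> \<Psi>,
  which has lower order.  Hence it suffices to compose generators of the filtration.
  Elements of the center Z_0 are right multiplications x \<mapsto> x c, and each I_r is stable
  under \<Phi> \<mapsto> \<Phi>(-) c and \<Phi> \<mapsto> \<Phi>(- c).  For the remaining generators, \<delta>_a \<Phi> \<in> I_{n-1} and
  \<delta>_a \<Psi> \<in> I_{m-1}, the Leibniz rule \<delta>_a(\<Phi> \<circ> \<Psi>) = \<delta>_a \<Phi> \<circ> \<Psi> + \<Phi> \<circ> \<delta>_a \<Psi> closes an
  induction on n and m. *)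

definition sub_bimodule :: "('a::ring_1 \<Rightarrow> 'a) set \<Rightarrow> bool" where
  "sub_bimodule M \<longleftrightarrow>
     (\<lambda>x. 0) \<in> M \<and> (\<forall>\<Phi>\<in>M. \<forall>\<Psi>\<in>M. (\<lambda>x. \<Phi> x + \<Psi> x) \<in> M) \<and>
     (\<forall>a. \<forall>\<Phi>\<in>M. lact a \<Phi> \<in> M \<and> ract \<Phi> a \<in> M)"

lemma sub_bimoduleD:
  assumes "sub_bimodule M"
  shows sub_bimodule_zero: "(\<lambda>x. 0) \<in> M"
    and sub_bimodule_add: "\<Phi> \<in> M \<Longrightarrow> \<Psi> \<in> M \<Longrightarrow> (\<lambda>x. \<Phi> x + \<Psi> x) \<in> M"
    and sub_bimodule_lact: "\<Phi> \<in> M \<Longrightarrow> lact a \<Phi> \<in> M"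
    and sub_bimodule_ract: "\<Phi> \<in> M \<Longrightarrow> ract \<Phi> a \<in> M"
  using assms unfolding sub_bimodule_def by blast+

lemma sub_bimodule_diff:
  assumes "sub_bimodule M" "\<Phi> \<in> M" "\<Psi> \<in> M"
  shows "(\<lambda>x. \<Phi> x - \<Psi> x) \<in> M"
proof -
  have "(\<lambda>x. \<Phi> x + lact (-1) \<Psi> x) \<in> M"
    using assms by (simp add: sub_bimodule_add sub_bimodule_lact)
  then show ?thesis
    by (simp add: lact_def)
qed

lemma sub_bimodule_gen_bimod: "sub_bimodule (gen_bimod S)"
  by (auto simp: sub_bimodule_def intro: gen_bimod.intros)

lemma sub_bimodule_diff_ops: "sub_bimodule (diff_ops sm r)"
  by (cases r) (simp_all add: sub_bimodule_gen_bimod)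

abbreviation hom_center :: "('k::comm_ring_1 \<Rightarrow> 'a::ring_1 \<Rightarrow> 'a) \<Rightarrow> ('a \<Rightarrow> 'a) set" where
  "hom_center sm \<equiv> {\<Phi> \<in> HomK sm. \<forall>a. lact a \<Phi> = ract \<Phi> a}"

abbreviation hom_center_mod ::
    "('k::comm_ring_1 \<Rightarrow> 'a::ring_1 \<Rightarrow> 'a) \<Rightarrow> nat \<Rightarrow> ('a \<Rightarrow> 'a) set" where
  "hom_center_mod sm r \<equiv> {\<Phi> \<in> HomK sm. \<forall>a. delta a \<Phi> \<in> diff_ops sm r}"

lemma diff_ops_Suc_mono: "diff_ops sm r \<subseteq> diff_ops sm (Suc r)"
  by (auto intro: gen_bimod.gen_base)

lemma hom_center_mod_subset_diff_ops: "hom_center_mod sm r \<subseteq> diff_ops sm (Suc r)"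
  by (auto intro: gen_bimod.gen_base)

lemma hom_center_apply:
  assumes "\<forall>a. lact a \<Phi> = ract \<Phi> a"
  shows "\<Phi> x = x * \<Phi> 1"
proof -
  have "lact x \<Phi> 1 = ract \<Phi> x 1"
    using assms by simp
  then show ?thesis
    by (simp add: lact_def ract_def)
qed

lemma lact_comp: "lact a \<Phi> \<circ> \<Psi> = lact a (\<Phi> \<circ> \<Psi>)"
  by (simp add: lact_def comp_def)

lemma ract_comp: "ract \<Phi> a \<circ> \<Psi> = \<Phi> \<circ> lact a \<Psi>"
  by (simp add: lact_def ract_def comp_def)

lemma comp_ract: "\<Phi> \<circ> ract \<Psi> a = ract (\<Phi> \<circ> \<Psi>) a"
  by (simp add: ract_def comp_def)

lemma comp_lact: "\<Phi> \<circ> lact a \<Psi> = (\<lambda>x. lact a (\<Phi> \<circ> \<Psi>) x - (delta a \<Phi> \<circ> \<Psi>) x)"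
  by (simp add: delta_def lact_def ract_def comp_def)

lemma delta_comp:
  assumes additive: "\<And>x y. \<Phi> (x + y) = \<Phi> x + \<Phi> y"
  shows "delta a (\<Phi> \<circ> \<Psi>) = (\<lambda>x. (delta a \<Phi> \<circ> \<Psi>) x + (\<Phi> \<circ> delta a \<Psi>) x)"
proof -
  have "\<Phi> (u - v) = \<Phi> u - \<Phi> v" for u v
    using additive[of "u - v" v] by (simp add: algebra_simps)
  then show ?thesis
    by (simp add: delta_def lact_def ract_def comp_def)
qed

lemma HomK_add: "\<Phi> \<in> HomK sm \<Longrightarrow> \<Phi> (x + y) = \<Phi> x + \<Phi> y"
  by (simp add: HomK_def)

lemma HomK_comp: "\<Phi> \<in> HomK sm \<Longrightarrow> \<Psi> \<in> HomK sm \<Longrightarrow> \<Phi> \<circ> \<Psi> \<in> HomK sm"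
  by (simp add: HomK_def)

definition bimodule_map :: "(('a::ring_1 \<Rightarrow> 'a) \<Rightarrow> ('a \<Rightarrow> 'a)) \<Rightarrow> bool" where
  "bimodule_map T \<longleftrightarrow>
     T (\<lambda>x. 0) = (\<lambda>x. 0) \<and> (\<forall>\<Phi> \<Psi>. T (\<lambda>x. \<Phi> x + \<Psi> x) = (\<lambda>x. T \<Phi> x + T \<Psi> x)) \<and>
     (\<forall>a \<Phi>. T (lact a \<Phi>) = lact a (T \<Phi>) \<and> T (ract \<Phi> a) = ract (T \<Phi>) a)"

lemma bimodule_mapD:
  assumes "bimodule_map T"
  shows bimodule_map_zero: "T (\<lambda>x. 0) = (\<lambda>x. 0)"
    and bimodule_map_add: "T (\<lambda>x. \<Phi> x + \<Psi> x) = (\<lambda>x. T \<Phi> x + T \<Psi> x)"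
    and bimodule_map_lact: "T (lact a \<Phi>) = lact a (T \<Phi>)"
    and bimodule_map_ract: "T (ract \<Phi> a) = ract (T \<Phi>) a"
  using assms unfolding bimodule_map_def by blast+

lemma bimodule_map_delta:
  assumes "bimodule_map T"
  shows "T (delta a \<Phi>) = delta a (T \<Phi>)"
proof -
  have "delta a \<Psi> = (\<lambda>x. lact a \<Psi> x + lact (-1) (ract \<Psi> a) x)" for \<Psi>
    by (simp add: delta_def lact_def)
  then show ?thesis
    using assms by (simp add: bimodule_map_add bimodule_map_lact bimodule_map_ract)
qed

lemma bimodule_map_gen_bimod:
  assumes "\<Phi> \<in> gen_bimod S" and "bimodule_map T"
    and "\<And>\<Phi>. \<Phi> \<in> S \<Longrightarrow> T \<Phi> \<in> gen_bimod S'"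
  shows "T \<Phi> \<in> gen_bimod S'"
  using assms(1)
  by induction (use assms(2,3) in \<open>auto simp: bimodule_mapD intro: gen_bimod.intros\<close>)

lemma diff_ops_bimodule_map:
  assumes T: "bimodule_map T" and HomK: "\<And>\<Phi>. \<Phi> \<in> HomK sm \<Longrightarrow> T \<Phi> \<in> HomK sm"
  shows "\<Phi> \<in> diff_ops sm r \<Longrightarrow> T \<Phi> \<in> diff_ops sm r"
proof (induction r arbitrary: \<Phi>)
  case 0
  have center_closed: "T \<Psi> \<in> hom_center sm" if "\<Psi> \<in> hom_center sm" for \<Psi>
  proof -
    have "lact a (T \<Psi>) = ract (T \<Psi>) a" for a
      using that by (simp flip: bimodule_map_lact[OF T] bimodule_map_ract[OF T])
    with that HomK show ?thesis by simp
  qed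
  show ?case
    unfolding diff_ops.simps
    by (rule bimodule_map_gen_bimod[OF 0[unfolded diff_ops.simps] T])
      (rule gen_bimod.gen_base, rule center_closed)
next
  case (Suc r)
  have center_mod_closed: "T \<Psi> \<in> hom_center_mod sm r" if "\<Psi> \<in> hom_center_mod sm r" for \<Psi>
    using that Suc.IH HomK by (simp add: bimodule_map_delta[OF T, symmetric])
  show ?case
    unfolding diff_ops.simps
    by (rule bimodule_map_gen_bimod[OF Suc.prems[unfolded diff_ops.simps] T])
      (use Suc.IH center_mod_closed in \<open>blast intro: gen_bimod.gen_base\<close>)
qed

lemma diff_ops_mult_right:
  assumes "K_ring sm" and "\<Phi> \<in> diff_ops sm r"
  shows "(\<lambda>x. \<Phi> x * c) \<in> diff_ops sm r"
proof -
  have "bimodule_map (\<lambda>\<Phi> x. \<Phi> x * c)"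
    by (simp add: bimodule_map_def lact_def ract_def distrib_right mult.assoc)
  moreover have "(\<lambda>x. \<Phi> x * c) \<in> HomK sm" if "\<Phi> \<in> HomK sm" for \<Phi>
    using that assms(1) unfolding HomK_def K_ring_def by (simp add: distrib_right)
  ultimately show ?thesis
    using diff_ops_bimodule_map[of "\<lambda>\<Phi> x. \<Phi> x * c"] assms(2) by blast
qed

lemma diff_ops_comp_mult_right:
  assumes "K_ring sm" and "\<Phi> \<in> diff_ops sm r"
  shows "(\<lambda>x. \<Phi> (x * c)) \<in> diff_ops sm r"
proof -
  have "bimodule_map (\<lambda>\<Phi> x. \<Phi> (x * c))"
    by (simp add: bimodule_map_def lact_def ract_def mult.assoc)
  moreover have "(\<lambda>x. \<Phi> (x * c)) \<in> HomK sm" if "\<Phi> \<in> HomK sm" for \<Phi>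
  proof -
    have "sm k x * c = sm k (x * c)" for k x
      using assms(1) by (simp add: K_ring_def)
    with that show ?thesis
      by (simp add: HomK_def distrib_right)
  qed
  ultimately show ?thesis
    using diff_ops_bimodule_map[of "\<lambda>\<Phi> x. \<Phi> (x * c)"] assms(2) by blast
qed

lemma hom_center_comp:
  assumes "K_ring sm" and "\<Phi> \<in> hom_center sm" and "\<Psi> \<in> diff_ops sm m"
  shows "\<Phi> \<circ> \<Psi> \<in> diff_ops sm m"
proof -
  have "\<Phi> \<circ> \<Psi> = (\<lambda>x. \<Psi> x * \<Phi> 1)"
    unfolding comp_def by (rule ext, rule hom_center_apply) (use assms(2) in simp)
  then show ?thesis
    using diff_ops_mult_right[OF assms(1,3)] by simp
qed

lemma comp_hom_center:
  assumes "K_ring sm" and "\<Phi> \<in> diff_ops sm n" and "\<Psi> \<in> hom_center sm"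
  shows "\<Phi> \<circ> \<Psi> \<in> diff_ops sm n"
proof -
  have "\<Phi> \<circ> \<Psi> = (\<lambda>x. \<Phi> (x * \<Psi> 1))"
    unfolding comp_def by (rule ext, rule arg_cong, rule hom_center_apply) (use assms(3) in simp)
  then show ?thesis
    using diff_ops_comp_mult_right[OF assms(1,2)] by simp
qed

lemma gen_bimod_comp_left:
  assumes "\<Phi> \<in> gen_bimod S" and "sub_bimodule M" and "sub_bimodule N"
    and "\<And>\<Phi> \<Psi>. \<Phi> \<in> S \<Longrightarrow> \<Psi> \<in> M \<Longrightarrow> \<Phi> \<circ> \<Psi> \<in> N"
  shows "\<Psi> \<in> M \<Longrightarrow> \<Phi> \<circ> \<Psi> \<in> N"
  using assms(1)
proof (induction arbitrary: \<Psi>)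
  case (gen_base \<Phi>)
  then show ?case using assms(4) by blast
next
  case gen_zero
  then show ?case using sub_bimodule_zero[OF assms(3)] by (simp add: comp_def)
next
  case (gen_add \<Phi>1 \<Phi>2)
  then show ?case using sub_bimodule_add[OF assms(3)] by (simp add: comp_def)
next
  case (gen_lact \<Phi> a)
  show ?case
    unfolding lact_comp by (rule sub_bimodule_lact[OF assms(3) gen_lact.IH[OF gen_lact.prems]])
next
  case (gen_ract \<Phi> a)
  show ?case
    unfolding ract_comp by (rule gen_ract.IH[OF sub_bimodule_lact[OF assms(2) gen_ract.prems]])
qed

lemma gen_bimod_comp_right:
  assumes "\<Psi> \<in> gen_bimod S" and "sub_bimodule N"
    and additive: "\<And>x y. \<Phi> (x + y) = \<Phi> x + \<Phi> y"
    and "\<And>\<Psi>. \<Psi> \<in> S \<Longrightarrow> \<Phi> \<circ> \<Psi> \<in> N"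
    and "\<And>a \<Psi>. \<Psi> \<in> gen_bimod S \<Longrightarrow> delta a \<Phi> \<circ> \<Psi> \<in> N"
  shows "\<Phi> \<circ> \<Psi> \<in> N"
  using assms(1)
proof induction
  case (gen_base \<Psi>)
  then show ?case using assms(4) by blast
next
  case gen_zero
  have "\<Phi> 0 = 0"
    using additive[of 0 0] by simp
  then show ?case using sub_bimodule_zero[OF assms(2)] by (simp add: comp_def)
next
  case (gen_add \<Psi>1 \<Psi>2)
  then show ?case using sub_bimodule_add[OF assms(2)] by (simp add: comp_def additive)
next
  case (gen_lact \<Psi> a)
  show ?case
    unfolding comp_lact
    by (rule sub_bimodule_diff[OF assms(2) sub_bimodule_lact[OF assms(2) gen_lact.IH]
          assms(5)[OF gen_lact.hyps]])
next
  case (gen_ract \<Psi> a)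
  show ?case
    unfolding comp_ract by (rule sub_bimodule_ract[OF assms(2) gen_ract.IH])
qed

definition comp_adds_orders ::
    "('k::comm_ring_1 \<Rightarrow> 'a::ring_1 \<Rightarrow> 'a) \<Rightarrow> nat \<Rightarrow> nat \<Rightarrow> bool" where
  "comp_adds_orders sm n m \<longleftrightarrow>
     (\<forall>\<Phi>\<in>diff_ops sm n. \<forall>\<Psi>\<in>diff_ops sm m. \<Phi> \<circ> \<Psi> \<in> diff_ops sm (n + m))"

lemma comp_adds_orders_0_left:
  assumes "K_ring sm"
  shows "comp_adds_orders sm 0 m"
  unfolding comp_adds_orders_def diff_ops.simps(1) add_0
  using gen_bimod_comp_left[OF _ sub_bimodule_diff_ops sub_bimodule_diff_ops
      hom_center_comp[OF assms]]
  by blast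

lemma comp_adds_orders_SucI:
  assumes "comp_adds_orders sm r m"
    and "\<And>\<Phi> \<Psi>. \<Phi> \<in> hom_center_mod sm r \<Longrightarrow> \<Psi> \<in> diff_ops sm m \<Longrightarrow>
      \<Phi> \<circ> \<Psi> \<in> diff_ops sm (Suc r + m)"
  shows "comp_adds_orders sm (Suc r) m"
proof -
  have "\<Phi> \<circ> \<Psi> \<in> diff_ops sm (Suc r + m)"
    if "\<Phi> \<in> diff_ops sm r" "\<Psi> \<in> diff_ops sm m" for \<Phi> \<Psi>
    using that assms(1) diff_ops_Suc_mono unfolding comp_adds_orders_def by fastforce
  with assms(2) show ?thesis
    unfolding comp_adds_orders_def diff_ops.simps(2)
    using gen_bimod_comp_left[OF _ sub_bimodule_diff_ops sub_bimodule_diff_ops] by blast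
qed

lemma delta_comp_diff_ops:
  assumes "comp_adds_orders sm r m" and "\<Phi> \<in> hom_center_mod sm r" and "\<Psi> \<in> diff_ops sm m"
  shows "delta a \<Phi> \<circ> \<Psi> \<in> diff_ops sm (Suc r + m)"
  using assms diff_ops_Suc_mono unfolding comp_adds_orders_def by fastforce

lemma comp_adds_orders_Suc_0:
  assumes K: "K_ring sm" and r_0: "comp_adds_orders sm r 0"
  shows "comp_adds_orders sm (Suc r) 0"
proof (rule comp_adds_orders_SucI[OF r_0])
  fix \<Phi> \<Psi> assume \<Phi>: "\<Phi> \<in> hom_center_mod sm r" and \<Psi>: "\<Psi> \<in> diff_ops sm 0"
  show "\<Phi> \<circ> \<Psi> \<in> diff_ops sm (Suc r + 0)"
  proof (rule gen_bimod_comp_right[OF \<Psi>[unfolded diff_ops.simps] sub_bimodule_diff_ops])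
    show "\<Phi> (x + y) = \<Phi> x + \<Phi> y" for x y
      using \<Phi> HomK_add by blast
    show "\<Phi> \<circ> \<Psi>' \<in> diff_ops sm (Suc r + 0)" if "\<Psi>' \<in> hom_center sm" for \<Psi>'
      using comp_hom_center[OF K subsetD[OF hom_center_mod_subset_diff_ops \<Phi>] that]
      by (simp only: add_0_right)
    show "delta a \<Phi> \<circ> \<Psi>' \<in> diff_ops sm (Suc r + 0)"
      if "\<Psi>' \<in> gen_bimod (hom_center sm)" for a \<Psi>'
      using delta_comp_diff_ops[OF r_0 \<Phi>] that by (simp only: diff_ops.simps)
  qed
qed

lemma hom_center_mod_comp:
  assumes r_Suc: "comp_adds_orders sm r (Suc s)" and Suc_r: "comp_adds_orders sm (Suc r) s"
    and \<Phi>: "\<Phi> \<in> hom_center_mod sm r" and \<Psi>: "\<Psi> \<in> hom_center_mod sm s"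
  shows "\<Phi> \<circ> \<Psi> \<in> hom_center_mod sm (Suc r + s)"
proof -
  have "delta a (\<Phi> \<circ> \<Psi>) \<in> diff_ops sm (Suc r + s)" for a
  proof -
    have "delta a \<Phi> \<circ> \<Psi> \<in> diff_ops sm (Suc r + s)"
      using r_Suc \<Phi> \<Psi> hom_center_mod_subset_diff_ops
      unfolding comp_adds_orders_def add_Suc_shift by blast
    moreover have "\<Phi> \<circ> delta a \<Psi> \<in> diff_ops sm (Suc r + s)"
      using Suc_r \<Phi> \<Psi> hom_center_mod_subset_diff_ops unfolding comp_adds_orders_def by blast
    moreover have "\<Phi> (x + y) = \<Phi> x + \<Phi> y" for x y
      using \<Phi> HomK_add by blast
    ultimately show ?thesis
      by (simp only: delta_comp sub_bimodule_add[OF sub_bimodule_diff_ops])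
  qed
  with \<Phi> \<Psi> show ?thesis
    by (simp add: HomK_comp)
qed

lemma comp_adds_orders_Suc_Suc:
  assumes r_Suc: "comp_adds_orders sm r (Suc s)" and Suc_r: "comp_adds_orders sm (Suc r) s"
  shows "comp_adds_orders sm (Suc r) (Suc s)"
proof (rule comp_adds_orders_SucI[OF r_Suc])
  fix \<Phi> \<Psi> assume \<Phi>: "\<Phi> \<in> hom_center_mod sm r" and \<Psi>: "\<Psi> \<in> diff_ops sm (Suc s)"
  show "\<Phi> \<circ> \<Psi> \<in> diff_ops sm (Suc r + Suc s)"
  proof (rule gen_bimod_comp_right[OF \<Psi>[unfolded diff_ops.simps] sub_bimodule_diff_ops])
    show "\<Phi> (x + y) = \<Phi> x + \<Phi> y" for x y
      using \<Phi> HomK_add by blast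
    show "\<Phi> \<circ> \<Psi>' \<in> diff_ops sm (Suc r + Suc s)"
      if "\<Psi>' \<in> hom_center_mod sm s \<union> diff_ops sm s" for \<Psi>'
    proof -
      have "\<Phi> \<circ> \<Psi>' \<in> diff_ops sm (Suc (Suc r + s))"
        using that
      proof
        assume "\<Psi>' \<in> hom_center_mod sm s"
        then have "\<Phi> \<circ> \<Psi>' \<in> hom_center_mod sm (Suc r + s)"
          by (rule hom_center_mod_comp[OF r_Suc Suc_r \<Phi>])
        then show ?thesis
          by (rule subsetD[OF hom_center_mod_subset_diff_ops])
      next
        assume "\<Psi>' \<in> diff_ops sm s"
        then have "\<Phi> \<circ> \<Psi>' \<in> diff_ops sm (Suc r + s)"
          using Suc_r subsetD[OF hom_center_mod_subset_diff_ops \<Phi>]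
          unfolding comp_adds_orders_def by blast
        then show ?thesis
          by (rule subsetD[OF diff_ops_Suc_mono])
      qed
      then show ?thesis
        by (simp only: add_Suc_right)
    qed
    show "delta a \<Phi> \<circ> \<Psi>' \<in> diff_ops sm (Suc r + Suc s)"
      if "\<Psi>' \<in> gen_bimod (hom_center_mod sm s \<union> diff_ops sm s)" for a \<Psi>'
      using delta_comp_diff_ops[OF r_Suc \<Phi>] that by (simp only: diff_ops.simps)
  qed
qed

lemma comp_adds_orders:
  assumes "K_ring sm"
  shows "comp_adds_orders sm n m"
proof (induction n arbitrary: m)
  case 0
  show ?case
    by (rule comp_adds_orders_0_left[OF assms])
next
  case (Suc r)
  note IH_r = Suc.IH
  show ?case
  proof (induction m)
    case 0
    show ?case
      by (rule comp_adds_orders_Suc_0[OF assms IH_r])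
  next
    case (Suc s)
    show ?case
      by (rule comp_adds_orders_Suc_Suc[OF IH_r Suc.IH])
  qed
qed

theorem proposition9:
  fixes sm :: "'k::comm_ring_1 \<Rightarrow> 'a::ring_1 \<Rightarrow> 'a"
    and \<Delta>1 \<Delta>2 :: "'a \<Rightarrow> 'a" and n m :: nat
  assumes "K_ring sm"
    and "\<Delta>1 \<in> diff_ops sm n"
    and "\<Delta>2 \<in> diff_ops sm m"
  shows "\<Delta>1 \<circ> \<Delta>2 \<in> diff_ops sm (n + m)"
  using comp_adds_orders[OF assms(1)] assms(2,3) unfolding comp_adds_orders_def by blast

end
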